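(* Let $V$ be the Volterra operator on $L^2[0,1]$. For every $f\in L^2[0,1]$, every complex $\lambda\neq0$ and every $u\in(0,1]$, \[\|(\lambda-V)^{-1}Vf\|\ge\frac{1}{\sqrt u}\Bigl(\Bigl|\int_0^u f(s)e^{\frac{u-s}{\lambda}}\,ds\Bigr|-\|f\|\Bigr).\]
   Context: $Vf(t)=\int_0^t f(s)\,ds$; norms are $L^2[0,1]$ norms. *)

theory Defs
  imports "HOL-Analysis.Analysis"
begin

definition L2_01 :: "(real \<Rightarrow> complex) \<Rightarrow> bool" where
  "L2_01 f \<longleftrightarrow> f \<in> borel_measurable (lebesgue_on {0..1}) \<and>
     integrable (lebesgue_on {0..1}) (\<lambda>x. (cmod (f x))^2)"

definition L2norm :: "(real \<Rightarrow> complex) \<Rightarrow> real" where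
  "L2norm f = sqrt (LINT x | lebesgue_on {0..1}. (cmod (f x))^2)"

definition volterra :: "(real \<Rightarrow> complex) \<Rightarrow> real \<Rightarrow> complex" where
  "volterra f t = (LINT s | lebesgue_on {0..t}. f s)"

text \<open>g represents (lam - V)^{-1} V f in L^2[0,1], i.e. g in L^2 and
  (lam - V) g = V f almost everywhere on [0,1].\<close>
definition is_resolvent_Vf :: "complex \<Rightarrow> (real \<Rightarrow> complex) \<Rightarrow> (real \<Rightarrow> complex) \<Rightarrow> bool" where
  "is_resolvent_Vf lam f g \<longleftrightarrow> L2_01 g \<and>
     (AE t in lebesgue_on {0..1}. lam * g t - volterra g t = volterra f t)"

end

theory Submission
  imports Defs
begin

(* Write k = 1 / lam and F = V f. If lam g - V g = F, then G = V g is C^1 with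
   G' = g = k (G + F) and G 0 = 0, so lam G is the Duhamel solution
   (integral from 0 to t of e^(k (t - r)) F r dr) of y' = k y + F; conversely this formula
   gives a solution g, which settles existence. Swapping the order of integration
   (integration by parts against F) gives
   integral from 0 to u of f s e^(k (u - s)) ds = F u + G u, and Cauchy-Schwarz bounds
   |F u| <= sqrt u ||f|| and |G u| <= sqrt u ||g||; since sqrt u <= 1 the estimate follows. *)

lemma (in finite_measure) square_integral_le:
  fixes f :: "'a \<Rightarrow> real"
  assumes [measurable]: "f \<in> borel_measurable M" and sq: "integrable M (\<lambda>x. f x ^ 2)"
  shows "(\<integral>x. f x \<partial>M)\<^sup>2 \<le> measure M (space M) * (\<integral>x. f x ^ 2 \<partial>M)"
proof -
  have fi: "integrable M f"
    by (rule square_integrable_imp_integrable) (use sq in auto)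
  define m where "m = measure M (space M)"
  define I where "I = (\<integral>x. f x \<partial>M)"
  define A where "A = (\<integral>x. f x ^ 2 \<partial>M)"
  have "0 \<le> (\<integral>x. (m * f x - I)\<^sup>2 \<partial>M)"
    by simp
  also have "\<dots> = (\<integral>x. m\<^sup>2 * f x ^ 2 - 2 * m * I * f x + I\<^sup>2 \<partial>M)"
    by (simp add: power2_diff power_mult_distrib algebra_simps)
  also have "\<dots> = m\<^sup>2 * A - 2 * m * I * I + m * I\<^sup>2"
    using fi sq by (simp add: m_def I_def A_def)
  also have "\<dots> = m * (m * A - I\<^sup>2)"
    by (simp add: power2_eq_square algebra_simps)
  finally have nonneg: "0 \<le> m * (m * A - I\<^sup>2)" .
  show ?thesis
  proof (cases "m = 0")
    case True
    then have "AE x in M. f x = 0"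
      by (intro emeasure_0_AE) (simp add: m_def emeasure_eq_measure)
    then have "I = 0"
      unfolding I_def by (rule integral_eq_zero_AE)
    then show ?thesis
      using True by (simp add: I_def)
  next
    case False
    then have "0 < m"
      unfolding m_def by (simp add: zero_less_measure_iff)
    with nonneg have "I\<^sup>2 \<le> m * A"
      by (simp add: zero_le_mult_iff)
    then show ?thesis
      by (simp add: m_def I_def A_def)
  qed
qed

lemma L2_01_integrable:
  assumes "L2_01 f"
  shows "integrable (lebesgue_on {0..1}) f"
proof -
  have meas: "f \<in> borel_measurable (lebesgue_on {0..1})"
    and sq: "integrable (lebesgue_on {0..1}) (\<lambda>x. (cmod (f x))\<^sup>2)"
    using assms by (auto simp: L2_01_def)
  have "integrable (lebesgue_on {0..1}) (\<lambda>x. cmod (f x))"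
    using finite_measure.square_integrable_imp_integrable[OF finite_measure_lebesgue_on _ sq] meas
    by auto
  then show ?thesis
    using meas by (simp add: integrable_norm_iff)
qed

lemma norm_volterra_le:
  assumes "L2_01 f" and "0 \<le> u" and "u \<le> 1"
  shows "cmod (volterra f u) \<le> sqrt u * L2norm f"
proof -
  have sq: "integrable (lebesgue_on {0..1}) (\<lambda>x. (cmod (f x))\<^sup>2)"
    using assms by (auto simp: L2_01_def)
  have meas_u: "(\<lambda>x. cmod (f x)) \<in> borel_measurable (lebesgue_on {0..u})"
    using integrable_subinterval[OF L2_01_integrable[OF assms(1)], of 0 u] assms by auto
  have sq_u: "integrable (lebesgue_on {0..u}) (\<lambda>x. (cmod (f x))\<^sup>2)"
    using integrable_subinterval[OF sq, of 0 u] assms by auto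
  have "cmod (volterra f u) \<le> (LINT x|lebesgue_on {0..u}. cmod (f x))"
    unfolding volterra_def by (rule integral_norm_bound)
  also have "\<dots> \<le> sqrt (u * (LINT x|lebesgue_on {0..u}. (cmod (f x))\<^sup>2))"
    using finite_measure.square_integral_le[OF finite_measure_lebesgue_on meas_u sq_u] assms
    by (intro real_le_rsqrt) (auto simp: measure_restrict_space)
  also have "\<dots> \<le> sqrt (u * (L2norm f)\<^sup>2)"
    unfolding L2norm_def using assms sq
    by (auto intro!: mult_left_mono integral_mono_lebesgue_on_AE simp: integral_nonneg_AE)
  also have "\<dots> = sqrt u * L2norm f"
    by (simp add: real_sqrt_mult L2norm_def)
  finally show ?thesis .
qed

definition duhamel :: "complex \<Rightarrow> (real \<Rightarrow> complex) \<Rightarrow> real \<Rightarrow> complex" where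
  "duhamel k h t = integral {0..t} (\<lambda>r. exp ((t - r) *\<^sub>R k) * h r)"

lemma duhamel_0 [simp]: "duhamel k h 0 = 0"
  by (simp add: duhamel_def)

lemma duhamel_eq_exp_mult:
  "duhamel k h t = exp (t *\<^sub>R k) * integral {0..t} (\<lambda>r. exp (r *\<^sub>R (-k)) * h r)"
proof -
  have "exp ((t - r) *\<^sub>R k) = exp (t *\<^sub>R k) * exp (r *\<^sub>R (-k))" for r
    by (simp add: mult_exp_exp algebra_simps)
  then show ?thesis
    by (simp add: duhamel_def mult.assoc flip: integral_mult_right)
qed

lemma has_vector_derivative_duhamel:
  assumes "continuous_on {0..T} h" and "t \<in> {0..T}"
  shows "(duhamel k h has_vector_derivative k * duhamel k h t + h t) (at t within {0..T})"
proof -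
  have "((\<lambda>t. integral {0..t} (\<lambda>r. exp (r *\<^sub>R (-k)) * h r)) has_vector_derivative
      exp (t *\<^sub>R (-k)) * h t) (at t within {0..T})"
    by (rule integral_has_vector_derivative) (intro continuous_intros assms)+
  from has_vector_derivative_mult[OF exp_scaleR_has_vector_derivative_right[where A=k] this]
  show ?thesis
    by (simp add: duhamel_eq_exp_mult[abs_def] mult_exp_exp algebra_simps)
qed

lemma linear_ode_solution_eq_duhamel:
  assumes h: "continuous_on {0..T} h"
    and y': "\<And>t. t \<in> {0..T} \<Longrightarrow> (y has_vector_derivative k * y t + h t) (at t within {0..T})"
    and "y 0 = 0" and t: "t \<in> {0..T}"
  shows "y t = duhamel k h t"
proof -
  define W where "W x = exp (x *\<^sub>R (-k)) * (y x - duhamel k h x)" for x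
  have W': "(W has_vector_derivative 0) (at x within {0..T})" if x: "x \<in> {0..T}" for x
  proof -
    have "(W has_vector_derivative exp (x *\<^sub>R (-k)) * ((k * y x + h x) - (k * duhamel k h x + h x))
        + exp (x *\<^sub>R (-k)) * (-k) * (y x - duhamel k h x)) (at x within {0..T})"
      unfolding W_def
      by (intro has_vector_derivative_mult exp_scaleR_has_vector_derivative_right
          has_vector_derivative_diff y' has_vector_derivative_duhamel h x)
    then show ?thesis
      by (simp add: algebra_simps)
  qed
  obtain c where c: "\<And>x. x \<in> {0..T} \<Longrightarrow> W x = c"
    using has_vector_derivative_zero_constant[OF convex_real_interval(5) W'] by blast
  have "W t = W 0"
    using c[OF t] c[of 0] t by simp
  also have "W 0 = 0"
    using \<open>y 0 = 0\<close> by (simp add: W_def)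
  finally show ?thesis
    by (simp add: W_def)
qed

lemma AE_lebesgue_on_subset:
  assumes "AE x in lebesgue_on T. P x" and "S \<subseteq> T" and "S \<in> sets lebesgue" and "T \<in> sets lebesgue"
  shows "AE x in lebesgue_on S. P x"
proof -
  have "AE x in lebesgue. x \<in> T \<longrightarrow> P x"
    using assms(1,4) by (simp add: AE_restrict_space_iff)
  then have "AE x in lebesgue. x \<in> S \<longrightarrow> P x"
    by eventually_elim (use assms(2) in auto)
  then show ?thesis
    using assms(3) by (simp add: AE_restrict_space_iff)
qed

lemma volterra_eq_integral:
  assumes "continuous_on {0..t} g"
  shows "volterra g t = integral {0..t} g"
  unfolding volterra_def
  by (rule lebesgue_integral_eq_integral[OF continuous_imp_integrable_real[OF assms]]) auto

lemma continuous_on_volterra: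
  assumes "integrable (lebesgue_on {0..T}) g"
  shows "continuous_on {0..T} (volterra g)"
  unfolding volterra_def[abs_def] by (rule indefinite_integral_continuous_real[OF assms])

lemma volterra_has_vector_derivative_AE:
  assumes g: "integrable (lebesgue_on {0..T}) g" and \<phi>: "continuous_on {0..T} \<phi>"
    and ae: "AE x in lebesgue_on {0..T}. g x = \<phi> x" and t: "t \<in> {0..T}"
  shows "(volterra g has_vector_derivative \<phi> t) (at t within {0..T})"
proof (rule has_vector_derivative_transform[OF t _ integral_has_vector_derivative[OF \<phi> t]])
  fix x assume x: "x \<in> {0..T}"
  have \<phi>_x: "continuous_on {0..x} \<phi>"
    using \<phi> x by (auto elim: continuous_on_subset)
  have "volterra g x = volterra \<phi> x"
    unfolding volterra_def
  proof (rule integral_cong_AE)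
    show "g \<in> borel_measurable (lebesgue_on {0..x})"
      using integrable_subinterval[OF g, of 0 x] x by auto
    show "\<phi> \<in> borel_measurable (lebesgue_on {0..x})"
      using \<phi>_x by (auto intro: continuous_imp_measurable_on_sets_lebesgue)
    show "AE y in lebesgue_on {0..x}. g y = \<phi> y"
      using x by (intro AE_lebesgue_on_subset[OF ae]) auto
  qed
  also have "\<dots> = integral {0..x} \<phi>"
    by (rule volterra_eq_integral[OF \<phi>_x])
  finally show "volterra g x = integral {0..x} \<phi>" .
qed

lemma integrable_mult_bounded:
  fixes f g :: "'a \<Rightarrow> 'b::{real_normed_algebra, second_countable_topology, banach}"
  assumes "integrable M f" and "g \<in> borel_measurable M"
    and "\<And>x. x \<in> space M \<Longrightarrow> norm (g x) \<le> C"
  shows "integrable M (\<lambda>x. f x * g x)"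
proof (rule Bochner_Integration.integrable_bound)
  show "integrable M (\<lambda>x. C * norm (f x))"
    using assms(1) by auto
  show "AE x in M. norm (f x * g x) \<le> norm (C * norm (f x))"
  proof (rule AE_I2)
    fix x assume x: "x \<in> space M"
    have C: "0 \<le> C"
      using order_trans[OF norm_ge_zero assms(3)[OF x]] .
    have "norm (f x * g x) \<le> norm (f x) * norm (g x)"
      by (rule norm_mult_ineq)
    also have "\<dots> \<le> norm (f x) * C"
      using assms(3)[OF x] by (rule mult_left_mono) simp
    finally show "norm (f x * g x) \<le> norm (C * norm (f x))"
      using C by (simp add: mult.commute)
  qed
qed (use assms(1,2) in measurable)

lemma integrable_pair_measure_fst:
  fixes f :: "'a \<Rightarrow> 'b::{banach, second_countable_topology}"
  assumes "finite_measure M" and "finite_measure N" and "integrable M f"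
  shows "integrable (M \<Otimes>\<^sub>M N) (\<lambda>p. f (fst p))"
proof -
  interpret pair_sigma_finite M N
    using assms(1,2) by (auto simp: pair_sigma_finite_def finite_measure_def)
  interpret N: finite_measure N
    by fact
  have [measurable]: "f \<in> borel_measurable M"
    using assms(3) by auto
  show ?thesis
    by (rule Fubini_integrable) (use assms(3) in auto)
qed

lemma norm_exp_scaleR_le:
  fixes k :: "'a::{real_normed_algebra_1, banach}"
  assumes "x \<in> {0..u}"
  shows "norm (exp (x *\<^sub>R k)) \<le> exp (u * norm k)"
proof -
  have "norm (exp (x *\<^sub>R k)) \<le> exp (norm (x *\<^sub>R k))"
    by (rule norm_exp)
  also have "\<dots> \<le> exp (u * norm k)"
    using assms by (auto intro!: mult_right_mono)
  finally show ?thesis .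
qed

lemma integral_lebesgue_on_indicator:
  fixes g :: "real \<Rightarrow> 'a::{banach, second_countable_topology}"
  assumes "S \<subseteq> T" and "S \<in> sets lebesgue" and "T \<in> sets lebesgue"
  shows "(LINT x|lebesgue_on T. indicator S x *\<^sub>R g x) = (LINT x|lebesgue_on S. g x)"
proof -
  have "(LINT x|lebesgue_on T. indicator S x *\<^sub>R g x) = (LINT x|lebesgue. indicator T x *\<^sub>R (indicator S x *\<^sub>R g x))"
    by (rule integral_restrict_space) (use assms in auto)
  also have "\<dots> = (LINT x|lebesgue. indicator S x *\<^sub>R g x)"
    using assms(1) by (intro Bochner_Integration.integral_cong) (auto simp: indicator_def)
  also have "\<dots> = (LINT x|lebesgue_on S. g x)"
    using assms by (simp add: integral_restrict_space)
  finally show ?thesis .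
qed

lemma volterra_eq_integral_if_le:
  assumes "r \<in> {0..u}"
  shows "(LINT s|lebesgue_on {0..u}. (if s \<le> r then g s else 0)) = volterra g r"
proof -
  have "(LINT s|lebesgue_on {0..u}. (if s \<le> r then g s else 0))
      = (LINT s|lebesgue_on {0..u}. indicator {0..r} s *\<^sub>R g s)"
    by (intro Bochner_Integration.integral_cong) (auto simp: indicator_def)
  also have "\<dots> = volterra g r"
    unfolding volterra_def using assms by (intro integral_lebesgue_on_indicator) auto
  finally show ?thesis .
qed

lemma integral_exp_if_ge:
  fixes k :: complex
  assumes "s \<in> {0..u}"
  shows "(LINT r|lebesgue_on {0..u}. (if s \<le> r then k * exp ((u - r) *\<^sub>R k) else 0)) = exp ((u - s) *\<^sub>R k) - 1"
proof -
  define P where "P r = - (exp (u *\<^sub>R k) * exp (r *\<^sub>R (-k)))" for r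
  have exp_split: "exp (u *\<^sub>R k) * exp (r *\<^sub>R (-k)) = exp ((u - r) *\<^sub>R k)" for r
    by (simp add: mult_exp_exp algebra_simps)
  have "(P has_vector_derivative k * exp ((u - r) *\<^sub>R k)) (at r within {s..u})" for r
  proof -
    have "(P has_vector_derivative - (exp (u *\<^sub>R k) * (exp (r *\<^sub>R (-k)) * (-k)))) (at r within {s..u})"
      unfolding P_def by (intro derivative_intros exp_scaleR_has_vector_derivative_right)
    then show ?thesis
      using exp_split[of r] by (simp add: algebra_simps)
  qed
  then have P: "((\<lambda>r. k * exp ((u - r) *\<^sub>R k)) has_integral P u - P s) {s..u}"
    using assms by (intro fundamental_theorem_of_calculus) auto
  have "(LINT r|lebesgue_on {0..u}. (if s \<le> r then k * exp ((u - r) *\<^sub>R k) else 0))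
      = (LINT r|lebesgue_on {0..u}. indicator {s..u} r *\<^sub>R (k * exp ((u - r) *\<^sub>R k)))"
    by (intro Bochner_Integration.integral_cong) (auto simp: indicator_def)
  also have "\<dots> = (LINT r|lebesgue_on {s..u}. k * exp ((u - r) *\<^sub>R k))"
    using assms by (intro integral_lebesgue_on_indicator) auto
  also have "\<dots> = integral {s..u} (\<lambda>r. k * exp ((u - r) *\<^sub>R k))"
    by (intro lebesgue_integral_eq_integral continuous_imp_integrable_real continuous_intros) auto
  also have "\<dots> = P u - P s"
    by (rule integral_unique[OF P])
  also have "\<dots> = exp ((u - s) *\<^sub>R k) - 1"
    unfolding P_def exp_split by simp
  finally show ?thesis .
qed

lemma integrable_exp_kernel:
  fixes f :: "real \<Rightarrow> complex" and k :: complex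
  assumes f: "integrable (lebesgue_on {0..u}) f"
  shows "integrable (lebesgue_on {0..u} \<Otimes>\<^sub>M lebesgue_on {0..u})
    (\<lambda>(s, r). f s * (if s \<le> r then k * exp ((u - r) *\<^sub>R k) else 0))"
  unfolding split_beta'
proof (rule integrable_mult_bounded[OF integrable_pair_measure_fst[OF _ _ f]])
  have [measurable]: "(\<lambda>x. x) \<in> borel_measurable (lebesgue_on {0..u::real})"
    by (intro continuous_imp_measurable_on_sets_lebesgue continuous_intros) auto
  show "(\<lambda>p. if fst p \<le> snd p then k * exp ((u - snd p) *\<^sub>R k) else 0)
      \<in> borel_measurable (lebesgue_on {0..u} \<Otimes>\<^sub>M lebesgue_on {0..u})"
    by measurable
  fix p assume "p \<in> space (lebesgue_on {0..u} \<Otimes>\<^sub>M lebesgue_on {0..u})"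
  then show "norm (if fst p \<le> snd p then k * exp ((u - snd p) *\<^sub>R k) else 0) \<le> norm k * exp (u * norm k)"
    using norm_exp_scaleR_le[of "u - snd p" u k]
    by (auto simp: space_pair_measure norm_mult intro: mult_left_mono)
qed (auto intro: finite_measure_lebesgue_on)

lemma integral_mult_exp_by_parts:
  fixes f :: "real \<Rightarrow> complex" and k :: complex
  assumes f: "integrable (lebesgue_on {0..u}) f"
  shows "(LINT s|lebesgue_on {0..u}. f s * exp ((u - s) *\<^sub>R k))
    = volterra f u + k * duhamel k (volterra f) u"
proof -
  define N where "N = lebesgue_on {0..u}"
  define K where "K s r = f s * (if s \<le> r then k * exp ((u - r) *\<^sub>R k) else 0)" for s r
  interpret pair_sigma_finite N N
    unfolding N_def using finite_measure_lebesgue_on[of "{0..u}"]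
    by (auto simp: pair_sigma_finite_def finite_measure_def)
  have "integrable N (\<lambda>s. f s * exp ((u - s) *\<^sub>R k))"
    unfolding N_def
  proof (rule integrable_mult_bounded[OF f])
    show "(\<lambda>s. exp ((u - s) *\<^sub>R k)) \<in> borel_measurable (lebesgue_on {0..u})"
      by (intro continuous_imp_measurable_on_sets_lebesgue continuous_intros) auto
    show "norm (exp ((u - s) *\<^sub>R k)) \<le> exp (u * norm k)" if "s \<in> space (lebesgue_on {0..u})" for s
      using that by (intro norm_exp_scaleR_le) auto
  qed
  then have "(LINT s|N. f s * exp ((u - s) *\<^sub>R k)) - volterra f u
      = (LINT s|N. f s * exp ((u - s) *\<^sub>R k) - f s)"
    using f by (simp add: N_def volterra_def)
  also have "\<dots> = (LINT s|N. LINT r|N. K s r)"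
    by (intro Bochner_Integration.integral_cong)
      (simp_all add: K_def N_def integral_exp_if_ge algebra_simps)
  also have "\<dots> = (LINT r|N. LINT s|N. K s r)"
    by (rule Fubini_integral[symmetric]) (use integrable_exp_kernel[OF f] in \<open>simp add: K_def N_def\<close>)
  also have "\<dots> = (LINT r|N. k * exp ((u - r) *\<^sub>R k) * volterra f r)"
  proof (intro Bochner_Integration.integral_cong refl)
    fix r assume r: "r \<in> space N"
    have "(LINT s|N. K s r) = (LINT s|N. k * exp ((u - r) *\<^sub>R k) * (if s \<le> r then f s else 0))"
      by (intro Bochner_Integration.integral_cong) (simp_all add: K_def)
    then show "(LINT s|N. K s r) = k * exp ((u - r) *\<^sub>R k) * volterra f r"
      using r by (simp add: N_def volterra_eq_integral_if_le)
  qed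
  also have "\<dots> = k * duhamel k (volterra f) u"
    unfolding duhamel_def N_def
    by (simp add: mult.assoc lebesgue_integral_eq_integral continuous_imp_integrable_real
        continuous_intros continuous_on_volterra[OF f])
  finally show ?thesis
    by (simp add: N_def algebra_simps)
qed

lemma volterra_0 [simp]: "volterra g 0 = 0"
  unfolding volterra_def
  by (intro integral_eq_zero_AE emeasure_0_AE) (simp add: emeasure_restrict_space)

lemma continuous_on_imp_L2_01:
  assumes "continuous_on {0..1} g"
  shows "L2_01 g"
  unfolding L2_01_def
  by (intro conjI continuous_imp_measurable_on_sets_lebesgue continuous_imp_integrable_real
      continuous_intros assms) auto

lemma is_resolvent_Vf_duhamel:
  assumes "L2_01 f" and lam: "lam \<noteq> 0"
  shows "is_resolvent_Vf lam f (\<lambda>t. (duhamel (1 / lam) (volterra f) t / lam + volterra f t) / lam)"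
proof -
  define D where "D = duhamel (1 / lam) (volterra f)"
  define g where "g = (\<lambda>t. (D t / lam + volterra f t) / lam)"
  have F: "continuous_on {0..1} (volterra f)"
    by (rule continuous_on_volterra[OF L2_01_integrable[OF assms(1)]])
  have D': "(D has_vector_derivative 1 / lam * D t + volterra f t) (at t within {0..T})"
    if "t \<in> {0..T}" and "T \<le> 1" for t T
    unfolding D_def
    by (rule has_vector_derivative_duhamel[OF _ that(1)]) (use F that in \<open>auto elim: continuous_on_subset\<close>)
  have g: "continuous_on {0..1} g"
    unfolding g_def
    by (intro continuous_intros F continuous_on_vector_derivative[of _ D]) (use D' lam in auto)
  have Vg: "volterra g t = D t / lam" if t: "t \<in> {0..1}" for t
  proof -
    have "volterra g t = integral {0..t} g"
      using g t by (intro volterra_eq_integral) (auto elim: continuous_on_subset)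
    also have "\<dots> = D t / lam - D 0 / lam"
    proof (intro integral_unique fundamental_theorem_of_calculus)
      fix x assume "x \<in> {0..t}"
      from has_vector_derivative_divide[OF D'[OF this], of lam] t
      show "((\<lambda>t. D t / lam) has_vector_derivative g x) (at x within {0..t})"
        by (simp add: g_def field_simps)
    qed (use t in auto)
    finally show ?thesis
      by (simp add: D_def)
  qed
  have "is_resolvent_Vf lam f g"
    unfolding is_resolvent_Vf_def
  proof (intro conjI continuous_on_imp_L2_01 g AE_I2)
    fix t :: real assume "t \<in> space (lebesgue_on {0..1})"
    then show "lam * g t - volterra g t = volterra f t"
      using lam by (simp add: Vg) (simp add: g_def field_simps)
  qed
  then show ?thesis
    by (simp add: g_def D_def)
qed

lemma resolvent_volterra_eq_duhamel:
  assumes f: "L2_01 f" and lam: "lam \<noteq> 0" and g: "is_resolvent_Vf lam f g" and t: "t \<in> {0..1}"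
  shows "lam * volterra g t = duhamel (1 / lam) (volterra f) t"
proof (rule linear_ode_solution_eq_duhamel[OF _ _ _ t])
  show F: "continuous_on {0..1} (volterra f)"
    by (rule continuous_on_volterra[OF L2_01_integrable[OF f]])
  have g_int: "integrable (lebesgue_on {0..1}) g"
    using g by (auto intro: L2_01_integrable simp: is_resolvent_Vf_def)
  have ae: "AE x in lebesgue_on {0..1}. g x = (volterra g x + volterra f x) / lam"
    using g unfolding is_resolvent_Vf_def
    by (auto elim!: eventually_mono simp: lam field_simps)
  fix x :: real assume x: "x \<in> {0..1}"
  have eq: "lam * ((volterra g x + volterra f x) / lam) = 1 / lam * (lam * volterra g x) + volterra f x"
    using lam by (simp add: field_simps)
  have "(volterra g has_vector_derivative (volterra g x + volterra f x) / lam) (at x within {0..1})"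
    by (intro volterra_has_vector_derivative_AE[OF g_int _ ae x] continuous_intros F
        continuous_on_volterra[OF g_int]) (simp add: lam)
  from has_vector_derivative_mult_right[OF this, of lam]
  show "((\<lambda>x. lam * volterra g x) has_vector_derivative
      1 / lam * (lam * volterra g x) + volterra f x) (at x within {0..1})"
    unfolding eq .
qed simp

theorem lemma4p9:
  fixes f :: "real \<Rightarrow> complex" and lam :: complex and u :: real
  assumes "L2_01 f" and "lam \<noteq> 0" and "0 < u" and "u \<le> 1"
  shows "(\<exists>g. is_resolvent_Vf lam f g) \<and>
    (\<forall>g. is_resolvent_Vf lam f g \<longrightarrow>
       L2norm g \<ge> (1 / sqrt u) *
         (cmod (LINT s | lebesgue_on {0..u}. f s * exp ((of_real u - of_real s) / lam)) - L2norm f))"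
proof (intro conjI allI impI)
  show "\<exists>g. is_resolvent_Vf lam f g"
    using is_resolvent_Vf_duhamel[OF assms(1,2)] by blast
next
  fix g assume g: "is_resolvent_Vf lam f g"
  define I where "I = (LINT s | lebesgue_on {0..u}. f s * exp ((of_real u - of_real s) / lam))"
  have exp_eq: "exp ((of_real u - of_real s) / lam) = exp ((u - s) *\<^sub>R (1 / lam))" for s
    by (simp add: scaleR_conv_of_real)
  have "I = volterra f u + 1 / lam * duhamel (1 / lam) (volterra f) u"
    unfolding I_def exp_eq using assms
    by (intro integral_mult_exp_by_parts integrable_subinterval[OF L2_01_integrable]) auto
  also have "\<dots> = volterra f u + volterra g u"
    using resolvent_volterra_eq_duhamel[OF assms(1,2) g, of u] assms by (simp add: field_simps)
  finally have "cmod I \<le> cmod (volterra f u) + cmod (volterra g u)"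
    by (simp add: norm_triangle_ineq)
  also have "\<dots> \<le> sqrt u * L2norm f + sqrt u * L2norm g"
    using assms g by (intro add_mono norm_volterra_le) (auto simp: is_resolvent_Vf_def)
  moreover have "sqrt u * L2norm f \<le> L2norm f"
    using assms by (intro mult_left_le_one_le) (auto simp: L2norm_def)
  ultimately have "cmod I - L2norm f \<le> sqrt u * L2norm g"
    by linarith
  then show "L2norm g \<ge> (1 / sqrt u) * (cmod I - L2norm f)"
    using assms by (simp add: divide_le_eq mult.commute)
qed

end
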